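(* Let $\Omega\subset\mathbb{R}^n$ be a bounded open convex set with smooth boundary. If for some $\Lambda>0$ problem $(N_\Lambda)$ admits a nonconstant continuous viscosity solution $u$, then $\Lambda\ge\frac{2}{\operatorname{diam}(\Omega)}$.
   Context: $\operatorname{diam}(\Omega)=\sup_{x,y\in\Omega}|x-y|$. $\nu$ denotes the outer unit normal to $\partial\Omega$, and $\Delta_\infty u=\sum_{i,j=1}^n u_{x_i}u_{x_ix_j}u_{x_j}$. For $\Lambda\ge 0$, problem $(N_\Lambda)$ is $$\min\{|\nabla u|-\Lambda|u|,-\Delta_\infty u\}=0 \text{ in }\{u>0\}\cap\Omega,\quad \max\{\Lambda|u|-|\nabla u|,-\Delta_\infty u\}=0 \text{ in }\{u<0\}\cap\Omega,\quad -\Delta_\infty u=0 \text{ in }\{u=0\}\cap\Omega,\quad \tfrac{\partial u}{\partial\nu}=0 \text{ on }\partial\Omega,$$ understood in the viscosity sense as follows. For $s\in\mathbb{R}$, $\xi\in\mathbb{R}^n$, $X$ a symmetric $n\times n$ matrix, let $F(s,\xi,X)=\min\{|\xi|-\Lambda|s|,-\langle X\xi,\xi\rangle\}$, $G(s,\xi,X)=\max\{\Lambda|s|-|\xi|,-\langle X\xi,\xi\rangle\}$, $H(X)=-\langle X\xi,\xi\rangle$ (evaluated at the same $\xi$). For a function $u$ and point $x_0$, let $E$ denote $F$ if $u(x_0)>0$, $G$ if $u(x_0)<0$, $H$ if $u(x_0)=0$. An upper semicontinuous $u$ on $\overline\Omega$ is a viscosity subsolution if: for every $x_0\in\Omega$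 and $\phi\in C^2(\Omega)$ with $\phi(x_0)=u(x_0)$ and $u(x)<\phi(x)$ for $x\neq x_0$, one has $E(\phi(x_0),\nabla\phi(x_0),\nabla^2\phi(x_0))\le 0$; and for every $x_0\in\partial\Omega$ and $\phi\in C^2(\overline\Omega)$ with the same touching property, $\min\{E(\phi(x_0),\nabla\phi(x_0),\nabla^2\phi(x_0)),\frac{\partial\phi}{\partial\nu}(x_0)\}\le 0$. A lower semicontinuous $u$ is a viscosity supersolution if the same holds with $u(x)>\phi(x)$ for $x\ne x_0$, with "$E\le 0$" replaced by "$E\ge 0$" at interior points and with $\max\{E(\phi(x_0),\nabla\phi(x_0),\nabla^2\phi(x_0)),\frac{\partial\phi}{\partial\nu}(x_0)\}\ge 0$ at boundary points. A continuous $u$ is a viscosity solution if it is both a sub- and a supersolution. *)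

theory Defs
  imports "HOL-Analysis.Analysis"
begin

fun Ck_fun :: "nat \<Rightarrow> ('a::euclidean_space \<Rightarrow> real) \<Rightarrow> bool" where
  "Ck_fun 0 f = continuous_on UNIV f"
| "Ck_fun (Suc k) f = ((\<forall>x. f differentiable (at x)) \<and>
      (\<forall>v. Ck_fun k (\<lambda>x. frechet_derivative f (at x) v)))"

definition smooth_fun :: "('a::euclidean_space \<Rightarrow> real) \<Rightarrow> bool" where
  "smooth_fun f \<longleftrightarrow> (\<forall>k. Ck_fun k f)"

definition grad :: "('a::euclidean_space \<Rightarrow> real) \<Rightarrow> 'a \<Rightarrow> 'a" where
  "grad f x = (\<Sum>b\<in>Basis. frechet_derivative f (at x) b *\<^sub>R b)"

(* rho is a smooth (global) defining function of Omega, i.e. Omega has smooth boundary *)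
definition smooth_defining_fun :: "'a::euclidean_space set \<Rightarrow> ('a \<Rightarrow> real) \<Rightarrow> bool" where
  "smooth_defining_fun \<Omega> \<rho> \<longleftrightarrow> smooth_fun \<rho> \<and> \<Omega> = {x. \<rho> x < 0} \<and>
     (\<forall>x\<in>frontier \<Omega>. grad \<rho> x \<noteq> 0)"

definition outer_normal :: "('a::euclidean_space \<Rightarrow> real) \<Rightarrow> 'a \<Rightarrow> 'a" where
  "outer_normal \<rho> x = grad \<rho> x /\<^sub>R norm (grad \<rho> x)"

(* phi is C^2 on S with gradient g and Hessian H (H x is the derivative of g at x,
   a linear map, so  <H x xi, xi> = xi \<bullet> H x xi); derivatives taken within S *)
definition C2_test :: "'a::euclidean_space set \<Rightarrow> ('a \<Rightarrow> real) \<Rightarrow> ('a \<Rightarrow> 'a) \<Rightarrow> ('a \<Rightarrow> 'a \<Rightarrow> 'a) \<Rightarrow> bool" where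
  "C2_test S \<phi> g H \<longleftrightarrow>
     (\<forall>x\<in>S. (\<phi> has_derivative (\<lambda>h. g x \<bullet> h)) (at x within S)) \<and>
     (\<forall>x\<in>S. (g has_derivative H x) (at x within S)) \<and>
     (\<forall>h. continuous_on S (\<lambda>x. H x h))"

definition opF :: "real \<Rightarrow> real \<Rightarrow> 'a::euclidean_space \<Rightarrow> ('a \<Rightarrow> 'a) \<Rightarrow> real" where
  "opF \<Lambda> s \<xi> X = min (norm \<xi> - \<Lambda> * \<bar>s\<bar>) (- (\<xi> \<bullet> X \<xi>))"

definition opG :: "real \<Rightarrow> real \<Rightarrow> 'a::euclidean_space \<Rightarrow> ('a \<Rightarrow> 'a) \<Rightarrow> real" where
  "opG \<Lambda> s \<xi> X = max (\<Lambda> * \<bar>s\<bar> - norm \<xi>) (- (\<xi> \<bullet> X \<xi>))"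

definition opH :: "'a::euclidean_space \<Rightarrow> ('a \<Rightarrow> 'a) \<Rightarrow> real" where
  "opH \<xi> X = - (\<xi> \<bullet> X \<xi>)"

definition opE :: "real \<Rightarrow> real \<Rightarrow> 'a::euclidean_space \<Rightarrow> ('a \<Rightarrow> 'a) \<Rightarrow> real" where
  "opE \<Lambda> s \<xi> X = (if s > 0 then opF \<Lambda> s \<xi> X else if s < 0 then opG \<Lambda> s \<xi> X else opH \<xi> X)"

definition visc_sub :: "real \<Rightarrow> 'a::euclidean_space set \<Rightarrow> ('a \<Rightarrow> 'a) \<Rightarrow> ('a \<Rightarrow> real) \<Rightarrow> bool" where
  "visc_sub \<Lambda> \<Omega> \<nu> u \<longleftrightarrow>
    (\<forall>x0\<in>\<Omega>. \<forall>\<phi> g H. C2_test \<Omega> \<phi> g H \<and> \<phi> x0 = u x0 \<and> (\<forall>x\<in>\<Omega> - {x0}. u x < \<phi> x)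
        \<longrightarrow> opE \<Lambda> (\<phi> x0) (g x0) (H x0) \<le> 0) \<and>
    (\<forall>x0\<in>frontier \<Omega>. \<forall>\<phi> g H. C2_test (closure \<Omega>) \<phi> g H \<and> \<phi> x0 = u x0 \<and>
        (\<forall>x\<in>closure \<Omega> - {x0}. u x < \<phi> x)
        \<longrightarrow> min (opE \<Lambda> (\<phi> x0) (g x0) (H x0)) (g x0 \<bullet> \<nu> x0) \<le> 0)"

definition visc_super :: "real \<Rightarrow> 'a::euclidean_space set \<Rightarrow> ('a \<Rightarrow> 'a) \<Rightarrow> ('a \<Rightarrow> real) \<Rightarrow> bool" where
  "visc_super \<Lambda> \<Omega> \<nu> u \<longleftrightarrow>
    (\<forall>x0\<in>\<Omega>. \<forall>\<phi> g H. C2_test \<Omega> \<phi> g H \<and> \<phi> x0 = u x0 \<and> (\<forall>x\<in>\<Omega> - {x0}. u x > \<phi> x)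
        \<longrightarrow> opE \<Lambda> (\<phi> x0) (g x0) (H x0) \<ge> 0) \<and>
    (\<forall>x0\<in>frontier \<Omega>. \<forall>\<phi> g H. C2_test (closure \<Omega>) \<phi> g H \<and> \<phi> x0 = u x0 \<and>
        (\<forall>x\<in>closure \<Omega> - {x0}. u x > \<phi> x)
        \<longrightarrow> max (opE \<Lambda> (\<phi> x0) (g x0) (H x0)) (g x0 \<bullet> \<nu> x0) \<ge> 0)"

definition visc_sol :: "real \<Rightarrow> 'a::euclidean_space set \<Rightarrow> ('a \<Rightarrow> 'a) \<Rightarrow> ('a \<Rightarrow> real) \<Rightarrow> bool" where
  "visc_sol \<Lambda> \<Omega> \<nu> u \<longleftrightarrow> continuous_on (closure \<Omega>) u \<and> visc_sub \<Lambda> \<Omega> \<nu> u \<and> visc_super \<Lambda> \<Omega> \<nu> u"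

end

theory Submission
  imports Defs
begin

text \<open>A viscosity subsolution \<open>u \<le> P\<close> (with \<open>P \<ge> 0\<close>) satisfies the one-sided Lipschitz bound
\<open>u x \<le> u z + \<Lambda> P |x - z|\<close>. Indeed, for \<open>k > \<Lambda> P\<close> and small \<open>\<epsilon> > 0\<close> the function
\<open>u - (k |y - z| - \<epsilon> |y - z|\<^sup>2)\<close> cannot attain a maximum above \<open>u z\<close>: at such a point the
(regularised) cone would touch \<open>u\<close> from above with a gradient steeper than \<open>\<Lambda> P\<close> and negative
second derivative in the gradient direction, so all three branches of the operator are positive;
on the boundary the cone gradient points outward by convexity, so the Neumann alternative fails too.
Applying the bound to \<open>u\<close> and to \<open>-u\<close> between a maximum point (value \<open>M > 0\<close>) and a minimum point
(value \<open>m < 0\<close>) at distance \<open>d\<close> gives \<open>M - m \<le> \<Lambda> M d\<close> and \<open>M - m \<le> -\<Lambda> m d\<close>; adding them yields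
\<open>2 \<le> \<Lambda> d \<le> \<Lambda> diam \<Omega>\<close>.\<close>

lemma DERIV_if_le:
  fixes f g f' g' :: "real \<Rightarrow> real"
  assumes df: "\<And>t. DERIV f t :> f' t" and dg: "\<And>t. t \<ge> a \<Longrightarrow> DERIV g t :> g' t"
    and "f a = g a" and "f' a = g' a"
  shows "DERIV (\<lambda>t. if t \<le> a then f t else g t) t :> (if t \<le> a then f' t else g' t)"
proof -
  have cl: "closure {..a} = {..a}" "closure {a<..} = {a..}" by auto
  have "((\<lambda>t. if t \<in> {..a} then f t else g t) has_derivative
      (if t \<in> {..a} then (\<lambda>h. f' t * h) else (\<lambda>h. g' t * h))) (at t within ({..a} \<union> {a<..}))"
  proof (rule has_derivative_If_within_closures[where f'="\<lambda>t h. f' t * h" and g'="\<lambda>t h. g' t * h"])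
    fix x assume "x \<in> {..a} \<union> (closure {..a} \<inter> closure {a<..})"
    show "(f has_derivative (\<lambda>h. f' x * h)) (at x within {..a} \<union> (closure {..a} \<inter> closure {a<..}))"
      using df[of x] by (auto simp add: has_field_derivative_def intro: has_derivative_at_withinI)
  next
    fix x assume "x \<in> {a<..} \<union> (closure {..a} \<inter> closure {a<..})"
    then have "x \<ge> a" by (auto simp: cl)
    show "(g has_derivative (\<lambda>h. g' x * h)) (at x within {a<..} \<union> (closure {..a} \<inter> closure {a<..}))"
      using dg[OF \<open>x \<ge> a\<close>] by (auto simp add: has_field_derivative_def intro: has_derivative_at_withinI)
  next
    fix x assume "x \<in> closure {..a}" "x \<in> closure {a<..}"
    then have "x = a" by (auto simp: cl)
    then show "f x = g x" "(\<lambda>h. f' x * h) = (\<lambda>h. g' x * h)" using assms(3,4) by auto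
  qed auto
  moreover have "{..a} \<union> {a<..} = (UNIV::real set)" by auto
  ultimately show ?thesis
    by (auto simp: has_field_derivative_def split: if_splits)
qed

subsection \<open>A \<open>C\<^sup>2\<close> regularisation of the square root\<close>

text \<open>Below \<open>d\<^sup>2\<close> the square root is replaced by its second-order Taylor polynomial at \<open>d\<^sup>2\<close>.\<close>

definition sqrt_reg :: "real \<Rightarrow> real \<Rightarrow> real" where
  "sqrt_reg d t = (if t \<le> d\<^sup>2 then d + (t - d\<^sup>2)/(2*d) - (t - d\<^sup>2)\<^sup>2/(8*d^3) else sqrt t)"

definition sqrt_reg' :: "real \<Rightarrow> real \<Rightarrow> real" where
  "sqrt_reg' d t = (if t \<le> d\<^sup>2 then 1/(2*d) - (t - d\<^sup>2)/(4*d^3) else 1/(2 * sqrt t))"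

definition sqrt_reg'' :: "real \<Rightarrow> real \<Rightarrow> real" where
  "sqrt_reg'' d t = (if t \<le> d\<^sup>2 then -1/(4*d^3) else -1/(4 * t * sqrt t))"

lemma sqrt_reg_has_real_derivative:
  assumes d: "d > 0"
  shows "DERIV (sqrt_reg d) t :> sqrt_reg' d t"
  unfolding sqrt_reg_def[abs_def] sqrt_reg'_def
proof (rule DERIV_if_le)
  fix t :: real
  show "DERIV (\<lambda>t. d + (t - d\<^sup>2)/(2*d) - (t - d\<^sup>2)\<^sup>2/(8*d^3)) t :> 1/(2*d) - (t - d\<^sup>2)/(4*d^3)"
    using d by (auto intro!: derivative_eq_intros simp: field_simps power2_eq_square power3_eq_cube)
next
  fix t :: real assume "d\<^sup>2 \<le> t"
  then have "t > 0" using d by (smt (verit) zero_less_power)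
  then show "DERIV sqrt t :> 1/(2 * sqrt t)"
    by (auto intro!: derivative_eq_intros simp: field_simps)
qed (use d in \<open>auto simp: power2_eq_square\<close>)

lemma sqrt_reg'_has_real_derivative:
  assumes d: "d > 0"
  shows "DERIV (sqrt_reg' d) t :> sqrt_reg'' d t"
  unfolding sqrt_reg'_def[abs_def] sqrt_reg''_def
proof (rule DERIV_if_le)
  fix t :: real
  show "DERIV (\<lambda>t. 1/(2*d) - (t - d\<^sup>2)/(4*d^3)) t :> -1/(4*d^3)"
    using d by (auto intro!: derivative_eq_intros simp: field_simps)
next
  fix t :: real assume "d\<^sup>2 \<le> t"
  then have "t > 0" using d by (smt (verit) zero_less_power)
  then show "DERIV (\<lambda>t. 1/(2 * sqrt t)) t :> -1/(4 * t * sqrt t)"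
    by (auto intro!: derivative_eq_intros simp: field_simps power2_eq_square)
qed (use d in \<open>auto simp: power2_eq_square power3_eq_cube\<close>)

lemma continuous_on_sqrt_reg'':
  assumes d: "d > 0"
  shows "continuous_on UNIV (sqrt_reg'' d)"
proof -
  have pos: "t > 0" if "d\<^sup>2 \<le> t" for t using d that by (smt (verit) zero_less_power)
  have "continuous_on UNIV (\<lambda>t. if id t \<le> d\<^sup>2 then -1/(4*d^3) else -1/(4 * t * sqrt t))"
  proof (rule continuous_on_cases_le)
    show "continuous_on {t \<in> UNIV. d\<^sup>2 \<le> id t} (\<lambda>t. -1/(4 * t * sqrt t))"
      by (intro continuous_intros) (auto dest: pos)
  qed (use d in \<open>auto intro!: continuous_intros simp: power2_eq_square power3_eq_cube\<close>)
  then show ?thesis unfolding sqrt_reg''_def[abs_def] by simp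
qed

lemma sqrt_le_sqrt_reg:
  assumes d: "d > 0" and t: "t \<ge> 0"
  shows "sqrt t \<le> sqrt_reg d t"
proof (cases "t \<le> d\<^sup>2")
  case True
  define v where "v = sqrt t"
  have v0: "v \<ge> 0" and tv: "t = v\<^sup>2" using t by (auto simp: v_def)
  have vd: "v \<le> d" using True d v0 tv by (simp add: power2_le_iff_abs_le)
  have "8*d^3 * (d + (t - d\<^sup>2)/(2*d) - (t - d\<^sup>2)\<^sup>2/(8*d^3) - v) = (v - d)\<^sup>2 * (d - v) * (3*d + v)"
    using d unfolding tv by (simp add: field_simps power2_eq_square power3_eq_cube)
  also have "\<dots> \<ge> 0" using vd v0 d by simp
  finally have "d + (t - d\<^sup>2)/(2*d) - (t - d\<^sup>2)\<^sup>2/(8*d^3) - v \<ge> 0"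
    using d by (simp add: zero_le_mult_iff)
  then show ?thesis using True by (simp add: sqrt_reg_def v_def)
qed (simp add: sqrt_reg_def)

lemma sqrt_reg_eq_sqrt:
  assumes "t > d\<^sup>2"
  shows "sqrt_reg d t = sqrt t" "sqrt_reg' d t = 1/(2 * sqrt t)" "sqrt_reg'' d t = -1/(4 * t * sqrt t)"
  using assms by (simp_all add: sqrt_reg_def sqrt_reg'_def sqrt_reg''_def)

lemma C2_test_subset:
  assumes "C2_test T \<phi> g H" "S \<subseteq> T"
  shows "C2_test S \<phi> g H"
  using assms unfolding C2_test_def
  by (meson continuous_on_subset has_derivative_subset subsetD)

lemma C2_test_linear: "C2_test S \<phi> g H \<Longrightarrow> x \<in> S \<Longrightarrow> linear (H x)"
  unfolding C2_test_def using has_derivative_linear by blast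

lemma C2_test_add:
  assumes "C2_test S f1 g1 H1" "C2_test S f2 g2 H2"
  shows "C2_test S (\<lambda>x. f1 x + f2 x) (\<lambda>x. g1 x + g2 x) (\<lambda>x h. H1 x h + H2 x h)"
  using assms unfolding C2_test_def
  by (auto intro!: derivative_eq_intros continuous_intros simp: inner_add_left)

lemma C2_test_add_const:
  assumes "C2_test S f g H"
  shows "C2_test S (\<lambda>x. c + f x) g H"
  using assms unfolding C2_test_def by (auto intro!: derivative_eq_intros)

lemma C2_test_uminus:
  assumes "C2_test S f g H"
  shows "C2_test S (\<lambda>x. - f x) (\<lambda>x. - g x) (\<lambda>x h. - H x h)"
  using assms unfolding C2_test_def
  by (auto intro!: derivative_eq_intros continuous_intros)

lemma has_derivative_inner_self_diff:
  fixes z :: "'a::real_inner"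
  shows "((\<lambda>x. (x - z) \<bullet> (x - z)) has_derivative (\<lambda>h. 2 * ((x - z) \<bullet> h))) (at x within S)"
proof -
  have "((\<lambda>x. (x - z) \<bullet> (x - z)) has_derivative (\<lambda>h. (x - z) \<bullet> h + h \<bullet> (x - z))) (at x within S)"
    by (auto intro!: derivative_eq_intros)
  then show ?thesis by (simp add: inner_commute)
qed

lemma C2_test_radial:
  fixes z :: "'a::euclidean_space" and F F' F'' :: "real \<Rightarrow> real"
  assumes dF: "\<And>t. DERIV F t :> F' t" and dF': "\<And>t. DERIV F' t :> F'' t"
    and cF'': "continuous_on UNIV F''"
  shows "C2_test S (\<lambda>x. F ((x-z)\<bullet>(x-z))) (\<lambda>x. (2 * F' ((x-z)\<bullet>(x-z))) *\<^sub>R (x - z))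
           (\<lambda>x h. (2 * F' ((x-z)\<bullet>(x-z))) *\<^sub>R h + (4 * F'' ((x-z)\<bullet>(x-z)) * ((x-z)\<bullet>h)) *\<^sub>R (x - z))"
  unfolding C2_test_def
proof (intro conjI ballI allI)
  fix x assume "x \<in> S"
  show "((\<lambda>x. F ((x-z)\<bullet>(x-z))) has_derivative (\<lambda>h. ((2 * F' ((x-z)\<bullet>(x-z))) *\<^sub>R (x - z)) \<bullet> h))
      (at x within S)"
    by (rule has_derivative_eq_rhs[OF DERIV_compose_FDERIV[OF dF has_derivative_inner_self_diff]])
      (auto simp: algebra_simps)
next
  fix x assume "x \<in> S"
  have "((\<lambda>x. 2 * F' ((x-z)\<bullet>(x-z))) has_derivative (\<lambda>h. 2 * (2 * ((x - z) \<bullet> h) * F'' ((x-z)\<bullet>(x-z)))))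
      (at x within S)"
    by (intro has_derivative_mult_right DERIV_compose_FDERIV[OF dF' has_derivative_inner_self_diff])
  moreover have "((\<lambda>x. x - z) has_derivative (\<lambda>h. h)) (at x within S)"
    by (auto intro!: derivative_eq_intros)
  ultimately show "((\<lambda>x. (2 * F' ((x-z)\<bullet>(x-z))) *\<^sub>R (x - z)) has_derivative
     (\<lambda>h. (2 * F' ((x-z)\<bullet>(x-z))) *\<^sub>R h + (4 * F'' ((x-z)\<bullet>(x-z)) * ((x-z)\<bullet>h)) *\<^sub>R (x - z)))
     (at x within S)"
    by (rule has_derivative_eq_rhs[OF has_derivative_scaleR]) (auto simp: algebra_simps)
next
  fix h
  have "continuous_on UNIV F'"
    using dF' by (meson DERIV_isCont continuous_at_imp_continuous_on)
  then have "continuous_on S (\<lambda>x. F' ((x-z)\<bullet>(x-z)))"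
    by (rule continuous_on_compose2) (auto intro!: continuous_intros)
  moreover have "continuous_on S (\<lambda>x. F'' ((x-z)\<bullet>(x-z)))"
    by (rule continuous_on_compose2[OF cF'']) (auto intro!: continuous_intros)
  ultimately show "continuous_on S
      (\<lambda>x. (2 * F' ((x-z)\<bullet>(x-z))) *\<^sub>R h + (4 * F'' ((x-z)\<bullet>(x-z)) * ((x-z)\<bullet>h)) *\<^sub>R (x - z))"
    by (intro continuous_intros)
qed

definition cone :: "'a::real_normed_vector \<Rightarrow> real \<Rightarrow> real \<Rightarrow> 'a \<Rightarrow> real" where
  "cone z k \<epsilon> y = k * norm (y - z) - \<epsilon> * (norm (y - z))\<^sup>2"

lemma C2_smoothed_cone:
  fixes z :: "'a::euclidean_space"
  assumes d: "d > 0" and k: "k \<ge> 0"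
  obtains \<psi> g H where "\<And>S. C2_test S \<psi> g H" and "\<And>y. cone z k \<epsilon> y \<le> \<psi> y"
    and "\<And>y. norm (y - z) > d \<Longrightarrow> \<psi> y = cone z k \<epsilon> y"
    and "\<And>y. norm (y - z) > d \<Longrightarrow> g y = (k / norm (y - z) - 2 * \<epsilon>) *\<^sub>R (y - z)"
    and "\<And>y. norm (y - z) > d \<Longrightarrow> g y \<bullet> H y (g y) = - 2 * \<epsilon> * (norm (g y))\<^sup>2"
proof -
  define F where "F t = k * sqrt_reg d t - \<epsilon> * t" for t
  define F' where "F' t = k * sqrt_reg' d t - \<epsilon>" for t
  define F'' where "F'' t = k * sqrt_reg'' d t" for t
  define g where "g y = (2 * F' ((y-z)\<bullet>(y-z))) *\<^sub>R (y - z)" for y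
  define H where "H y h = (2 * F' ((y-z)\<bullet>(y-z))) *\<^sub>R h + (4 * F'' ((y-z)\<bullet>(y-z)) * ((y-z)\<bullet>h)) *\<^sub>R (y - z)"
    for y h
  have C2: "C2_test S (\<lambda>y. F ((y-z)\<bullet>(y-z))) g H" for S
    unfolding F_def F'_def F''_def g_def H_def
    by (intro C2_test_radial continuous_intros continuous_on_sqrt_reg''[OF d])
      (auto intro!: derivative_eq_intros sqrt_reg_has_real_derivative[OF d]
        sqrt_reg'_has_real_derivative[OF d])
  have below: "cone z k \<epsilon> y \<le> F ((y-z)\<bullet>(y-z))" for y
  proof -
    have "norm (y - z) \<le> sqrt_reg d ((y-z)\<bullet>(y-z))"
      using sqrt_le_sqrt_reg[OF d] by (simp add: norm_eq_sqrt_inner)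
    then show ?thesis
      using k by (simp add: cone_def F_def power2_norm_eq_inner mult_left_mono)
  qed
  have outside: "F ((y-z)\<bullet>(y-z)) = cone z k \<epsilon> y \<and> g y = (k / norm (y - z) - 2 * \<epsilon>) *\<^sub>R (y - z) \<and>
      g y \<bullet> H y (g y) = - 2 * \<epsilon> * (norm (g y))\<^sup>2" if "norm (y - z) > d" for y
  proof -
    define r where "r = norm (y - z)"
    define v where "v = y - z"
    have r: "r > 0" "r\<^sup>2 > d\<^sup>2" using that d by (auto simp: r_def intro: power_strict_mono)
    have v: "v \<bullet> v = r\<^sup>2" by (simp add: r_def v_def power2_norm_eq_inner)
    define \<alpha> where "\<alpha> = k / r - 2 * \<epsilon>"
    have F': "2 * F' (r\<^sup>2) = \<alpha>"
      using r by (simp add: F'_def \<alpha>_def sqrt_reg_eq_sqrt[OF r(2)] field_simps)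
    have "sqrt_reg'' d (r\<^sup>2) = -1/(4 * r\<^sup>2 * r)"
      using r by (simp add: sqrt_reg_eq_sqrt[OF r(2)])
    then have F'': "4 * F'' (r\<^sup>2) = - k / r^3"
      by (simp add: F''_def power2_eq_square power3_eq_cube)
    have gy: "g y = \<alpha> *\<^sub>R v" by (simp only: g_def v_def[symmetric] v F')
    have Hy: "H y (g y) = \<alpha> *\<^sub>R (\<alpha> *\<^sub>R v) - (k / r^3 * (v \<bullet> (\<alpha> *\<^sub>R v))) *\<^sub>R v"
      unfolding H_def gy v_def[symmetric] v F' by (simp add: mult.assoc F'')
    have "g y \<bullet> H y (g y) = \<alpha> * \<alpha> * r\<^sup>2 * (\<alpha> - k / r)"
      unfolding Hy unfolding gy using v r
      by (simp add: inner_diff_right algebra_simps power2_eq_square power3_eq_cube field_simps)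
    also have "\<dots> = - 2 * \<epsilon> * (norm (g y))\<^sup>2"
      by (simp add: gy r_def v_def \<alpha>_def power_mult_distrib power2_eq_square)
    finally have "g y \<bullet> H y (g y) = - 2 * \<epsilon> * (norm (g y))\<^sup>2" .
    moreover have "F ((y-z)\<bullet>(y-z)) = cone z k \<epsilon> y"
    proof -
      have "sqrt_reg d (r\<^sup>2) = r" using r by (simp add: sqrt_reg_eq_sqrt[OF r(2)])
      then show ?thesis by (simp add: F_def cone_def v[unfolded v_def] flip: r_def)
    qed
    moreover have "g y = (k / norm (y - z) - 2 * \<epsilon>) *\<^sub>R (y - z)"
      by (simp add: gy \<alpha>_def r_def v_def)
    ultimately show ?thesis by blast
  qed
  show ?thesis by (rule that[OF C2 below]) (meson outside)+
qed

text \<open>Adding \<open>|y - x0|\<^sup>4\<close> makes the touching strict away from \<open>x0\<close> without changing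
  the first and second derivatives at \<open>x0\<close>.\<close>

lemma C2_majorant_of_cone:
  fixes z x0 :: "'a::euclidean_space"
  assumes x0z: "x0 \<noteq> z" and k: "k \<ge> 0"
  obtains \<psi> g H where "\<And>S. C2_test S \<psi> g H"
    and "\<psi> x0 = cone z k \<epsilon> x0" and "\<And>y. y \<noteq> x0 \<Longrightarrow> cone z k \<epsilon> y < \<psi> y"
    and "g x0 = (k / norm (x0 - z) - 2 * \<epsilon>) *\<^sub>R (x0 - z)"
    and "g x0 \<bullet> H x0 (g x0) = - 2 * \<epsilon> * (norm (g x0))\<^sup>2"
proof -
  have d: "norm (x0 - z) / 2 > 0" "norm (x0 - z) > norm (x0 - z) / 2" using x0z by auto
  obtain \<psi> g H where C2: "\<And>S. C2_test S \<psi> g H" and below: "\<And>y. cone z k \<epsilon> y \<le> \<psi> y"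
    and at_x0: "\<psi> x0 = cone z k \<epsilon> x0" "g x0 = (k / norm (x0 - z) - 2 * \<epsilon>) *\<^sub>R (x0 - z)"
      "g x0 \<bullet> H x0 (g x0) = - 2 * \<epsilon> * (norm (g x0))\<^sup>2"
    using C2_smoothed_cone[OF d(1) k, of z \<epsilon>] d(2) by metis
  define q where "q y = ((y-x0)\<bullet>(y-x0))\<^sup>2" for y
  define Dq where "Dq y = (4 * ((y-x0)\<bullet>(y-x0))) *\<^sub>R (y - x0)" for y
  define D2q where "D2q y h = (4 * ((y-x0)\<bullet>(y-x0))) *\<^sub>R h + (8 * ((y-x0)\<bullet>h)) *\<^sub>R (y - x0)" for y h
  have "C2_test S q Dq D2q" for S
  proof -
    have "C2_test S (\<lambda>y. ((y-x0)\<bullet>(y-x0))\<^sup>2) (\<lambda>y. (2 * (2 * ((y-x0)\<bullet>(y-x0)))) *\<^sub>R (y - x0))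
        (\<lambda>y h. (2 * (2 * ((y-x0)\<bullet>(y-x0)))) *\<^sub>R h + (4 * 2 * ((y-x0)\<bullet>h)) *\<^sub>R (y - x0))"
      by (rule C2_test_radial[where F'="\<lambda>t. 2 * t" and F''="\<lambda>_. 2"]) (auto intro!: derivative_eq_intros)
    then show ?thesis unfolding q_def Dq_def D2q_def by simp
  qed
  then have "C2_test S (\<lambda>y. \<psi> y + q y) (\<lambda>y. g y + Dq y) (\<lambda>y h. H y h + D2q y h)" for S
    by (rule C2_test_add[OF C2])
  moreover have "cone z k \<epsilon> y < \<psi> y + q y" if "y \<noteq> x0" for y
  proof -
    have "q y > 0" using that by (simp add: q_def)
    then show ?thesis using below[of y] by linarith
  qed
  moreover have "q x0 = 0" "Dq x0 = 0" "D2q x0 = (\<lambda>h. 0)"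
    by (auto simp: q_def Dq_def D2q_def)
  ultimately show ?thesis using that[of "\<lambda>y. \<psi> y + q y" "\<lambda>y. g y + Dq y" "\<lambda>y h. H y h + D2q y h"] at_x0
    by simp
qed

lemma opE_uminus:
  assumes "linear X"
  shows "opE \<Lambda> (-s) (-\<xi>) (\<lambda>h. - X h) = - opE \<Lambda> s \<xi> X"
proof -
  have "- ((-\<xi>) \<bullet> (- X (-\<xi>))) = \<xi> \<bullet> X \<xi>"
    using assms by (simp add: linear_neg)
  then show ?thesis
    unfolding opE_def opF_def opG_def opH_def by (simp add: max_def min_def)
qed

lemma opE_pos:
  assumes "\<Lambda> \<ge> 0" "norm \<xi> > \<Lambda> * P" "s \<le> P" "\<xi> \<bullet> X \<xi> < 0"
  shows "opE \<Lambda> s \<xi> X > 0"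
proof -
  have "s > 0 \<Longrightarrow> \<Lambda> * \<bar>s\<bar> \<le> \<Lambda> * P" using assms by (simp add: mult_left_mono)
  then show ?thesis using assms unfolding opE_def opF_def opG_def opH_def by auto
qed

lemma visc_super_imp_visc_sub_uminus:
  assumes "visc_super \<Lambda> \<Omega> \<nu> u"
  shows "visc_sub \<Lambda> \<Omega> \<nu> (\<lambda>x. - u x)"
  unfolding visc_sub_def
proof (intro conjI ballI allI impI; elim conjE)
  fix x0 \<phi> g H
  assume x0: "x0 \<in> \<Omega>" and C2: "C2_test \<Omega> \<phi> g H"
    and touch: "\<phi> x0 = - u x0" "\<forall>x\<in>\<Omega> - {x0}. - u x < \<phi> x"
  have "- \<phi> x0 = u x0" "\<forall>x\<in>\<Omega> - {x0}. u x > - \<phi> x" using touch by force+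
  then have "opE \<Lambda> (- \<phi> x0) (- g x0) (\<lambda>h. - H x0 h) \<ge> 0"
    using assms[unfolded visc_super_def, THEN conjunct1, rule_format, OF x0,
        of "\<lambda>x. - \<phi> x" "\<lambda>x. - g x" "\<lambda>x h. - H x h"] C2_test_uminus[OF C2] by blast
  then show "opE \<Lambda> (\<phi> x0) (g x0) (H x0) \<le> 0"
    using opE_uminus[OF C2_test_linear[OF C2 x0]] by simp
next
  fix x0 \<phi> g H
  assume x0: "x0 \<in> frontier \<Omega>" and C2: "C2_test (closure \<Omega>) \<phi> g H"
    and touch: "\<phi> x0 = - u x0" "\<forall>x\<in>closure \<Omega> - {x0}. - u x < \<phi> x"
  have "- \<phi> x0 = u x0" "\<forall>x\<in>closure \<Omega> - {x0}. u x > - \<phi> x" using touch by force+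
  then have "max (opE \<Lambda> (- \<phi> x0) (- g x0) (\<lambda>h. - H x0 h)) (- g x0 \<bullet> \<nu> x0) \<ge> 0"
    using assms[unfolded visc_super_def, THEN conjunct2, rule_format, OF x0,
        of "\<lambda>x. - \<phi> x" "\<lambda>x. - g x" "\<lambda>x h. - H x h"] C2_test_uminus[OF C2] by blast
  moreover have "x0 \<in> closure \<Omega>" using x0 by (simp add: frontier_def)
  ultimately show "min (opE \<Lambda> (\<phi> x0) (g x0) (H x0)) (g x0 \<bullet> \<nu> x0) \<le> 0"
    using opE_uminus[OF C2_test_linear[OF C2]] by auto
qed

lemma grad_inner:
  assumes "(f has_derivative D) (at x)"
  shows "grad f x \<bullet> v = D v"
proof -
  have lin: "linear D" using assms has_derivative_linear by blast
  have "grad f x \<bullet> v = (\<Sum>b\<in>Basis. D b * (b \<bullet> v))"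
    unfolding grad_def frechet_derivative_at[OF assms, symmetric] by (simp add: inner_sum_left)
  also have "\<dots> = D (\<Sum>b\<in>Basis. (v \<bullet> b) *\<^sub>R b)"
    by (simp add: linear_sum[OF lin] linear_cmul[OF lin] inner_commute mult.commute)
  also have "\<dots> = D v" by (simp add: euclidean_representation)
  finally show ?thesis .
qed

lemma has_derivative_nonpos_toward_negative:
  fixes f :: "'a::real_normed_vector \<Rightarrow> real"
  assumes f: "(f has_derivative D) (at x)" and "f x \<ge> 0"
    and neg: "\<And>t. 0 < t \<Longrightarrow> t < 1 \<Longrightarrow> f (x + t *\<^sub>R v) < 0"
  shows "D v \<le> 0"
proof (rule ccontr)
  assume "\<not> D v \<le> 0"
  have "((\<lambda>t. x + t *\<^sub>R v) has_derivative (\<lambda>h. h *\<^sub>R v)) (at 0)"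
    by (auto intro!: derivative_eq_intros)
  moreover have "(f has_derivative D) (at (x + 0 *\<^sub>R v))" using f by simp
  ultimately have "((\<lambda>t. f (x + t *\<^sub>R v)) has_derivative (\<lambda>h. D (h *\<^sub>R v))) (at 0)"
    by (rule has_derivative_compose)
  then have deriv: "DERIV (\<lambda>t. f (x + t *\<^sub>R v)) 0 :> D v"
    unfolding has_field_derivative_def
    by (rule has_derivative_eq_rhs) (auto simp: linear_cmul[OF has_derivative_linear[OF f]] mult.commute)
  obtain d where d: "d > 0" "\<And>h. 0 < h \<Longrightarrow> h < d \<Longrightarrow> f x < f (x + h *\<^sub>R v)"
    using DERIV_pos_inc_right[OF deriv] \<open>\<not> D v \<le> 0\<close> by auto
  have "f x < f (x + min (d/2) (1/2) *\<^sub>R v)" by (rule d(2)) (use d(1) in auto)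
  moreover have "f (x + min (d/2) (1/2) *\<^sub>R v) < 0" by (rule neg) (use d(1) in auto)
  ultimately show False using \<open>f x \<ge> 0\<close> by linarith
qed

text \<open>By convexity \<open>\<rho> < 0\<close> on the open segment from \<open>x0\<close> towards any point near \<open>z\<close>, so the
  gradient has nonpositive inner product with all these directions; taking the point
  \<open>z + (e/2) G/|G|\<close> makes the inequality strict.\<close>

lemma outer_normal_inner_pos:
  fixes \<Omega> :: "'a::euclidean_space set"
  assumes op: "open \<Omega>" and cv: "convex \<Omega>" and sd: "smooth_defining_fun \<Omega> \<rho>"
    and z: "z \<in> \<Omega>" and x0: "x0 \<in> frontier \<Omega>"
  shows "(x0 - z) \<bullet> outer_normal \<rho> x0 > 0"
proof -
  have "Ck_fun (Suc 0) \<rho>" using sd unfolding smooth_defining_fun_def smooth_fun_def by blast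
  then obtain D where D: "(\<rho> has_derivative D) (at x0)"
    using frechet_derivative_works by auto
  define G where "G = grad \<rho> x0"
  have G0: "G \<noteq> 0" using sd x0 unfolding smooth_defining_fun_def G_def by blast
  have Om: "\<Omega> = {x. \<rho> x < 0}" using sd unfolding smooth_defining_fun_def by blast
  have x0n: "x0 \<notin> \<Omega>" and x0c: "x0 \<in> closure \<Omega>"
    using x0 op by (auto simp: frontier_def interior_open)
  obtain e where e: "e > 0" "ball z e \<subseteq> \<Omega>" using op z open_contains_ball by blast
  define y where "y = z + (e/2) *\<^sub>R (G /\<^sub>R norm G)"
  have "y \<in> \<Omega>" using e G0 by (auto simp: y_def dist_norm)
  have seg: "\<rho> (x0 + t *\<^sub>R (y - x0)) < 0" if "0 < t" "t < 1" for t
  proof -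
    have "open_segment y x0 \<subseteq> interior \<Omega>"
      by (rule in_interior_closure_convex_segment[OF cv]) (use \<open>y \<in> \<Omega>\<close> op x0c in \<open>auto simp: interior_open\<close>)
    moreover have "x0 + t *\<^sub>R (y - x0) \<in> open_segment y x0"
      unfolding in_segment using that \<open>y \<in> \<Omega>\<close> x0n
      by (intro conjI exI[of _ "1 - t"]) (auto simp: algebra_simps)
    ultimately show ?thesis using op Om by (auto simp: interior_open)
  qed
  have "\<rho> x0 \<ge> 0" using x0n Om by auto
  then have "G \<bullet> (y - x0) \<le> 0"
    unfolding G_def grad_inner[OF D] using has_derivative_nonpos_toward_negative[OF D _ seg] by blast
  moreover have "G \<bullet> (y - x0) = G \<bullet> (z - x0) + (e/2) * norm G"
    using G0 by (simp add: y_def inner_diff_right inner_add_right power2_norm_eq_inner[symmetric] power2_eq_square)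
  ultimately have "G \<bullet> (x0 - z) \<ge> (e/2) * norm G"
    by (simp add: inner_diff_right)
  moreover have "(e/2) * norm G > 0" using e G0 by simp
  ultimately show ?thesis
    unfolding outer_normal_def G_def[symmetric] using G0 by (simp add: inner_commute)
qed

subsection \<open>Comparison with cones\<close>

lemma visc_sub_no_steep_concave_touch:
  fixes \<Omega> :: "'a::euclidean_space set"
  assumes op: "open \<Omega>" and cv: "convex \<Omega>" and sd: "smooth_defining_fun \<Omega> \<rho>"
    and L: "\<Lambda> \<ge> 0" and sub: "visc_sub \<Lambda> \<Omega> (outer_normal \<rho>) u"
    and bound: "\<forall>x\<in>closure \<Omega>. u x \<le> P"
    and x0: "x0 \<in> closure \<Omega>" and C2: "C2_test (closure \<Omega>) \<phi> g H"
    and touch: "\<phi> x0 = u x0" "\<forall>y\<in>closure \<Omega> - {x0}. u y < \<phi> y"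
    and z: "z \<in> \<Omega>" and radial: "g x0 = \<alpha> *\<^sub>R (x0 - z)" "\<alpha> > 0"
    and steep: "norm (g x0) > \<Lambda> * P" and concave: "g x0 \<bullet> H x0 (g x0) < 0"
  shows False
proof -
  have "\<phi> x0 \<le> P" using touch(1) bound x0 by simp
  from L steep this concave have pos: "opE \<Lambda> (\<phi> x0) (g x0) (H x0) > 0" by (rule opE_pos)
  show False
  proof (cases "x0 \<in> \<Omega>")
    case True
    have "C2_test \<Omega> \<phi> g H" using C2 closure_subset by (rule C2_test_subset)
    moreover have "\<forall>y\<in>\<Omega> - {x0}. u y < \<phi> y" using touch(2) closure_subset by blast
    ultimately have "opE \<Lambda> (\<phi> x0) (g x0) (H x0) \<le> 0"
      using sub True touch(1) unfolding visc_sub_def by blast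
    then show False using pos by simp
  next
    case False
    then have fr: "x0 \<in> frontier \<Omega>" using x0 op by (simp add: frontier_def interior_open)
    then have "min (opE \<Lambda> (\<phi> x0) (g x0) (H x0)) (g x0 \<bullet> outer_normal \<rho> x0) \<le> 0"
      using sub C2 touch unfolding visc_sub_def by blast
    moreover have "g x0 \<bullet> outer_normal \<rho> x0 > 0"
      using outer_normal_inner_pos[OF op cv sd z fr] radial by simp
    ultimately show False using pos by linarith
  qed
qed

lemma visc_sub_le_cone:
  fixes \<Omega> :: "'a::euclidean_space set"
  assumes bd: "bounded \<Omega>" and op: "open \<Omega>" and cv: "convex \<Omega>" and sd: "smooth_defining_fun \<Omega> \<rho>"
    and L: "\<Lambda> \<ge> 0" and cu: "continuous_on (closure \<Omega>) u"
    and sub: "visc_sub \<Lambda> \<Omega> (outer_normal \<rho>) u"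
    and bound: "\<forall>x\<in>closure \<Omega>. u x \<le> P" and P0: "P \<ge> 0"
    and z: "z \<in> \<Omega>" and k: "k > \<Lambda> * P" and x: "x \<in> closure \<Omega>"
  shows "u x \<le> u z + k * norm (x - z)"
proof -
  define K where "K = closure \<Omega>"
  have cK: "compact K" using bd by (simp add: K_def compact_closure)
  have zK: "z \<in> K" using z closure_subset by (auto simp: K_def)
  define R where "R = diameter K"
  have R: "norm (y - z) \<le> R" if "y \<in> K" for y
    using diameter_bounded_bound[of K y z] that zK cK compact_imp_bounded by (auto simp: R_def dist_norm)
  have LP0: "\<Lambda> * P \<ge> 0" using L P0 by simp
  define \<epsilon> where "\<epsilon> = (k - \<Lambda> * P) / (4 * (R + 1))"
  have eps: "\<epsilon> > 0" using k R[OF zK] by (simp add: \<epsilon>_def)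
  have steep_cone: "k - 2 * \<epsilon> * r > \<Lambda> * P" if "0 \<le> r" "r \<le> R" for r
  proof -
    have "2 * \<epsilon> * r \<le> 2 * \<epsilon> * R" using that eps by simp
    also have "\<dots> = (k - \<Lambda> * P) * (R / (2 * (R + 1)))"
      using that by (simp add: \<epsilon>_def field_simps)
    also have "\<dots> < (k - \<Lambda> * P) * 1"
      using k that by (intro mult_strict_left_mono) (auto simp: field_simps)
    finally show ?thesis by simp
  qed
  define w where "w y = u y - cone z k \<epsilon> y" for y
  have "continuous_on K w" unfolding w_def cone_def K_def
    by (intro continuous_intros cu)
  then obtain x0 where x0: "x0 \<in> K" and x0_max: "\<forall>y\<in>K. w y \<le> w x0"
    using continuous_attains_sup[OF cK] zK by blast
  have "w x0 \<le> u z"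
  proof (rule ccontr)
    assume "\<not> w x0 \<le> u z"
    then have "x0 \<noteq> z" by (auto simp: w_def cone_def)
    then obtain \<psi> g H where C2: "\<And>S. C2_test S \<psi> g H" and \<psi>x0: "\<psi> x0 = cone z k \<epsilon> x0"
      and majorant: "\<And>y. y \<noteq> x0 \<Longrightarrow> cone z k \<epsilon> y < \<psi> y"
      and gx0: "g x0 = (k / norm (x0 - z) - 2 * \<epsilon>) *\<^sub>R (x0 - z)"
      and Hessian: "g x0 \<bullet> H x0 (g x0) = - 2 * \<epsilon> * (norm (g x0))\<^sup>2"
      using C2_majorant_of_cone[of x0 z k \<epsilon>] k LP0 by auto
    define r0 where "r0 = norm (x0 - z)"
    have r0: "r0 > 0" "r0 \<le> R" using \<open>x0 \<noteq> z\<close> R[OF x0] by (auto simp: r0_def)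
    have slope: "k - 2 * \<epsilon> * r0 > \<Lambda> * P" using steep_cone r0 by simp
    have alpha: "k / r0 - 2 * \<epsilon> > 0" using slope LP0 r0 by (simp add: field_simps)
    have ngx0: "norm (g x0) = k - 2 * \<epsilon> * r0"
      using alpha r0 by (simp add: gx0 flip: r0_def) (simp add: field_simps)
    show False
    proof (rule visc_sub_no_steep_concave_touch[OF op cv sd L sub bound])
      show "C2_test (closure \<Omega>) (\<lambda>y. w x0 + \<psi> y) g H" by (rule C2_test_add_const[OF C2])
      show "w x0 + \<psi> x0 = u x0" by (simp add: \<psi>x0 w_def)
      show "\<forall>y\<in>closure \<Omega> - {x0}. u y < w x0 + \<psi> y"
        using x0_max majorant by (fastforce simp: K_def w_def)
      show "g x0 = (k / r0 - 2 * \<epsilon>) *\<^sub>R (x0 - z)" by (simp add: gx0 r0_def)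
      show "norm (g x0) > \<Lambda> * P" using ngx0 slope by simp
      show "g x0 \<bullet> H x0 (g x0) < 0" using Hessian eps ngx0 slope LP0 by simp
    qed (use x0 z alpha in \<open>auto simp: K_def\<close>)
  qed
  moreover have "u x - cone z k \<epsilon> x \<le> w x0" using x0_max x by (simp add: K_def w_def)
  moreover have "cone z k \<epsilon> x \<le> k * norm (x - z)" using eps by (simp add: cone_def)
  ultimately show ?thesis by simp
qed

lemma visc_sub_one_sided_Lipschitz:
  fixes \<Omega> :: "'a::euclidean_space set"
  assumes bd: "bounded \<Omega>" and op: "open \<Omega>" and cv: "convex \<Omega>" and sd: "smooth_defining_fun \<Omega> \<rho>"
    and L: "\<Lambda> \<ge> 0" and cu: "continuous_on (closure \<Omega>) u"
    and sub: "visc_sub \<Lambda> \<Omega> (outer_normal \<rho>) u"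
    and bound: "\<forall>x\<in>closure \<Omega>. u x \<le> P" and P0: "P \<ge> 0"
    and z: "z \<in> closure \<Omega>" and x: "x \<in> closure \<Omega>"
  shows "u x \<le> u z + \<Lambda> * P * norm (x - z)"
proof -
  have interior: "u x \<le> u y + \<Lambda> * P * norm (x - y)" if y: "y \<in> \<Omega>" for y
  proof (cases "x = y")
    case False
    then have r: "norm (x - y) > 0" by simp
    have "(u x - u y) / norm (x - y) \<le> \<Lambda> * P"
    proof (rule dense_ge)
      fix k assume "\<Lambda> * P < k"
      then show "(u x - u y) / norm (x - y) \<le> k"
        using visc_sub_le_cone[OF bd op cv sd L cu sub bound P0 y _ x] r by (simp add: field_simps)
    qed
    then show ?thesis using r by (simp add: field_simps)
  qed simp
  have "u z + \<Lambda> * P * norm (x - z) - u x \<ge> 0"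
  proof (rule continuous_ge_on_closure[OF _ z])
    show "continuous_on (closure \<Omega>) (\<lambda>y. u y + \<Lambda> * P * norm (x - y) - u x)"
      by (intro continuous_intros cu)
  qed (use interior in auto)
  then show ?thesis by simp
qed

lemma two_le_of_oscillation_bounds:
  fixes M m c d :: real
  assumes "m < M" and upper: "M \<le> m + c * max M 0 * d" and lower: "- m \<le> - M + c * max (- m) 0 * d"
  shows "2 \<le> c * d"
proof -
  have "M > 0" using upper \<open>m < M\<close> by (cases "M > 0") auto
  moreover have "m < 0" using lower \<open>m < M\<close> by (cases "m < 0") auto
  ultimately have "2 * (M - m) \<le> (c * d) * (M - m)" using upper lower by (simp add: algebra_simps)
  then show ?thesis by (rule mult_right_le_imp_le) (use \<open>m < M\<close> in simp)
qed

theorem proposition1: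
  fixes \<Omega> :: "'a::euclidean_space set" and \<rho> :: "'a \<Rightarrow> real"
    and u :: "'a \<Rightarrow> real" and \<Lambda> :: real
  assumes "bounded \<Omega>" and "open \<Omega>" and "convex \<Omega>"
    and "smooth_defining_fun \<Omega> \<rho>"
    and "\<Lambda> > 0"
    and "visc_sol \<Lambda> \<Omega> (outer_normal \<rho>) u"
    and "\<not> (\<exists>c. \<forall>x\<in>closure \<Omega>. u x = c)"
  shows "\<Lambda> \<ge> 2 / diameter \<Omega>"
proof -
  note domain = assms(1-4) and L = less_imp_le[OF assms(5)]
  have cu: "continuous_on (closure \<Omega>) u" and sub: "visc_sub \<Lambda> \<Omega> (outer_normal \<rho>) u"
    and sub_neg: "visc_sub \<Lambda> \<Omega> (outer_normal \<rho>) (\<lambda>x. - u x)"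
    using assms(6) visc_super_imp_visc_sub_uminus unfolding visc_sol_def by auto
  have compact: "compact (closure \<Omega>)" and nonempty: "closure \<Omega> \<noteq> {}"
    using assms(1,7) by (auto simp: compact_closure)
  obtain x1 where x1: "x1 \<in> closure \<Omega>" "\<forall>y\<in>closure \<Omega>. u y \<le> u x1"
    using continuous_attains_sup[OF compact nonempty cu] by blast
  obtain x2 where x2: "x2 \<in> closure \<Omega>" "\<forall>y\<in>closure \<Omega>. u x2 \<le> u y"
    using continuous_attains_inf[OF compact nonempty cu] by blast
  have "u x2 < u x1" using assms(7) x1 x2 by (metis antisym not_less)
  moreover have "u x1 \<le> u x2 + \<Lambda> * max (u x1) 0 * norm (x1 - x2)"
    using x1 x2 by (intro visc_sub_one_sided_Lipschitz[OF domain L cu sub]) auto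
  moreover have "- u x2 \<le> - u x1 + \<Lambda> * max (- u x2) 0 * norm (x1 - x2)"
    using x1 x2 cu unfolding norm_minus_commute[of x1]
    by (intro visc_sub_one_sided_Lipschitz[OF domain L _ sub_neg]) (auto intro: continuous_intros)
  ultimately have "2 \<le> \<Lambda> * norm (x1 - x2)" by (rule two_le_of_oscillation_bounds)
  also have "\<dots> \<le> \<Lambda> * diameter \<Omega>"
    using diameter_bounded_bound[of "closure \<Omega>" x1 x2] x1 x2 compact_imp_bounded[OF compact]
    by (intro mult_left_mono) (auto simp: diameter_closure[OF assms(1)] dist_norm L)
  finally have "2 \<le> \<Lambda> * diameter \<Omega>" .
  moreover from this have "diameter \<Omega> > 0"
    using assms(5) mult_nonneg_nonpos[of \<Lambda> "diameter \<Omega>"] by fastforce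
  ultimately show ?thesis by (simp add: divide_le_eq mult.commute)
qed

end
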